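(* Let $P_X$, $P_{Y|X}$ and $Q_Y$ be such that $P_{Y|X}(\cdot|x)\ll Q_Y$ for $P_X$-almost all $x$, let $(X,Y)\sim P_XP_{Y|X}$, and let $J\in\mathbb{Z}_{>0}$ have conditional distribution $J\,|\,\{X=x,Y=y\}\sim \mathrm{Geom}\big((\tfrac{\mathrm{d}P_{Y|X}(\cdot|x)}{\mathrm{d}Q_Y}(y)+1)^{-1}\big)$. Then $$\mathbb{E}[\log J]\le \mathbb{E}\big[D_{\mathrm{KL}}(P_{Y|X}(\cdot|X)\Vert Q_Y)\big]+1.$$
   Context: $\mathrm{Geom}(p)$ denotes the geometric distribution on $\{1,2,\ldots\}$ with $\mathbb{P}(J=k)=(1-p)^{k-1}p$. Logarithms are base 2; $D_{\mathrm{KL}}$ is in bits. *)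

theory Defs
  imports "HOL-Probability.Probability"
begin

text \<open>Geom(p) on {1,2,...}: P(J = k) = (1-p)^(k-1) p (meaningful for 0 < p <= 1).\<close>
definition geom_pos :: "real \<Rightarrow> nat pmf" where
  "geom_pos p = map_pmf Suc (geometric_pmf p)"

text \<open>KL divergence D(P || Q) in bits, as an extended real:
  the integral of log_2 (dP/dQ) with respect to P, split into positive and
  negative parts (so that the value +infinity is allowed).\<close>
definition KL_bits :: "'b measure \<Rightarrow> 'b measure \<Rightarrow> ereal" where
  "KL_bits Q P =
     enn2ereal (\<integral>\<^sup>+ y. ennreal (entropy_density 2 Q P y) \<partial>P)
   - enn2ereal (\<integral>\<^sup>+ y. ennreal (- entropy_density 2 Q P y) \<partial>P)"

end

theory Submission
  imports Defs
begin

text \<open>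
  Conditionally on \<open>X = x, Y = y\<close>, the geometric variable \<open>J\<close> has mean \<open>r + 1\<close>, where
  \<open>r = dP\<^sub>Y\<^sub>|\<^sub>X(\<cdot>|x)/dQ\<^sub>Y (y)\<close>, so by Jensen (concavity of \<open>log\<close>) \<open>E[log J | x, y] \<le> log (r + 1)\<close>.
  It remains to bound \<open>E[log (r + 1)] = E[log r] + E[log (1 + 1/r)]\<close>: the first term is the
  KL divergence, and since \<open>E\<^sub>P[1/r] \<le> 1\<close>, Jensen again gives \<open>E[log (1 + 1/r)] \<le> log 2 = 1\<close>.
  Both uses of Jensen are realised by the tangent line of \<open>log\<close>. All integrals are taken in
  \<open>ennreal\<close>, so positive and negative parts of \<open>log r\<close> have to be kept apart.
\<close>

lemma log_le_tangent_line:
  fixes b x a :: real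
  assumes "1 < b" "0 < x" "0 < a"
  shows "log b x \<le> log b a + (x / a - 1) / ln b"
proof -
  have "ln (x / a) \<le> x / a - 1"
    using assms by (intro ln_le_minus_one) auto
  then have "ln x - ln a \<le> x / a - 1"
    using assms by (simp add: ln_div)
  then have "(ln x - ln a) / ln b \<le> (x / a - 1) / ln b"
    using assms by (intro divide_right_mono) auto
  then show ?thesis
    by (simp add: log_def diff_divide_distrib)
qed

lemma nn_integral_Suc_geometric_pmf:
  assumes p: "p \<in> {0<..1}"
  shows "(\<integral>\<^sup>+ n. ennreal (real (Suc n)) \<partial>measure_pmf (geometric_pmf p)) = ennreal (1 / p)"
proof -
  have "(\<integral>\<^sup>+ n. ennreal (real (Suc n)) \<partial>measure_pmf (geometric_pmf p))
      = (\<integral>\<^sup>+ n. ennreal (real n) + 1 \<partial>measure_pmf (geometric_pmf p))"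
    by (simp add: ennreal_of_nat_eq_real_of_nat[symmetric] add.commute)
  also have "\<dots> = ennreal ((1 - p) / p) + 1"
    using expectation_geometric_pmf[OF p] integrable_real_geometric_pmf[OF p]
    by (simp add: nn_integral_add nn_integral_eq_integral)
  also have "\<dots> = ennreal ((1 - p) / p + 1)"
    using p by (simp add: ennreal_plus[of _ 1, simplified])
  also have "\<dots> = ennreal (1 / p)"
    using p by (simp add: field_simps)
  finally show ?thesis .
qed

lemma nn_integral_log_geom_pos_le:
  fixes b p :: real
  assumes b: "1 < b" and p: "p \<in> {0<..1}"
  shows "(\<integral>\<^sup>+ j. ennreal (log b (real j)) \<partial>measure_pmf (geom_pos p)) \<le> ennreal (log b (1 / p))"
proof -
  define m where "m = 1 / p"
  define c where "c = 1 / ln b"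
  have m: "1 \<le> m" and c: "0 < c"
    using p b by (auto simp: m_def c_def)
  have tangent: "ennreal (log b (real (Suc n))) + ennreal c
      \<le> ennreal (log b m) + ennreal (c / m) * ennreal (real (Suc n))" for n
  proof -
    have "(real (Suc n) / m - 1) / ln b = c / m * real (Suc n) - c"
      using b m by (simp add: c_def field_simps)
    then have "log b (real (Suc n)) + c \<le> log b m + c / m * real (Suc n)"
      using log_le_tangent_line[OF b, of "real (Suc n)" m] m by simp
    then show ?thesis
      using b c m by (simp flip: ennreal_plus ennreal_mult)
  qed
  have "(\<integral>\<^sup>+ n. ennreal (log b (real (Suc n))) \<partial>measure_pmf (geometric_pmf p)) + ennreal c
      = (\<integral>\<^sup>+ n. ennreal (log b (real (Suc n))) + ennreal c \<partial>measure_pmf (geometric_pmf p))"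
    by (simp add: nn_integral_add)
  also have "\<dots> \<le> (\<integral>\<^sup>+ n. ennreal (log b m) + ennreal (c / m) * ennreal (real (Suc n))
                      \<partial>measure_pmf (geometric_pmf p))"
    by (intro nn_integral_mono tangent)
  also have "\<dots> = ennreal (log b m) + ennreal c"
    using m c p
    by (simp add: nn_integral_add nn_integral_cmult nn_integral_Suc_geometric_pmf[OF p, simplified]
        m_def flip: ennreal_mult)
  finally show ?thesis
    by (simp add: geom_pos_def m_def)
qed

lemma half_le_ln_2: "1 / 2 \<le> ln (2::real)"
proof -
  have "ln (1 / 2 :: real) \<le> 1 / 2 - 1"
    by (intro ln_le_minus_one) auto
  then show ?thesis
    by (simp add: ln_div)
qed

text \<open>The constant \<open>1 / (2 ln 2)\<close> is the slope of \<open>t \<mapsto> log 2 (1 + t)\<close> at \<open>t = 1\<close>; it is added on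
  both sides so that the tangent bound can be stated with nonnegative terms only.\<close>
lemma ennreal_log_plus_one_le:
  fixes r :: real
  assumes r: "0 \<le> r"
  defines "c \<equiv> 1 / (2 * ln 2)"
  shows "ennreal (log 2 (r + 1)) + ennreal (- log 2 r) + ennreal c
      \<le> ennreal (log 2 r) + 1 + ennreal c * ennreal (1 / r)"
proof (cases "r = 0")
  case True
  then show ?thesis
    using half_le_ln_2 by (simp add: c_def log_def field_simps)
next
  case False
  with r have r: "0 < r" by simp
  have c: "0 < c" by (simp add: c_def)
  have "0 < 1 + 1 / r"
    using r by (simp add: add_pos_pos)
  then have "log 2 (1 + 1 / r) \<le> 1 + ((1 + 1 / r) / 2 - 1) / ln 2"
    using log_le_tangent_line[of 2 "1 + 1 / r" 2] by (simp only: log_eq_one)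
  moreover have "log 2 (r + 1) = log 2 r + log 2 (1 + 1 / r)"
    using log_mult[of 2 r "1 + 1 / r"] \<open>0 < 1 + 1 / r\<close> r by (simp add: distrib_left)
  moreover have "((1 + 1 / r) / 2 - 1) / ln 2 = c * (1 / r) - c"
    by (simp add: c_def field_simps)
  ultimately have key: "log 2 (r + 1) + c \<le> log 2 r + 1 + c * (1 / r)"
    by linarith
  have "0 \<le> log 2 (r + 1)" using r by simp
  then show ?thesis
    using key r c
    by (cases "0 \<le> log 2 r")
       (simp_all add: ennreal_neg ennreal_leI ennreal_1[symmetric]
         del: ennreal_1 flip: ennreal_plus ennreal_mult)
qed

lemma nn_integral_inverse_RN_deriv_le:
  assumes "sigma_finite_measure Q" "absolutely_continuous Q P" "sets P = sets Q"
  shows "(\<integral>\<^sup>+ y. ennreal (1 / enn2real (RN_deriv Q P y)) \<partial>P) \<le> emeasure Q (space Q)"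
proof -
  interpret Q: sigma_finite_measure Q by fact
  have "(\<integral>\<^sup>+ y. ennreal (1 / enn2real (RN_deriv Q P y)) \<partial>P)
      = (\<integral>\<^sup>+ y. RN_deriv Q P y * ennreal (1 / enn2real (RN_deriv Q P y)) \<partial>Q)"
    using assms(2,3) by (rule Q.RN_deriv_nn_integral) measurable
  also have "\<dots> \<le> (\<integral>\<^sup>+ y. 1 \<partial>Q)"
  proof (rule nn_integral_mono)
    fix y
    show "RN_deriv Q P y * ennreal (1 / enn2real (RN_deriv Q P y)) \<le> 1"
      by (cases "RN_deriv Q P y")
         (auto simp: ennreal_mult[symmetric] ennreal_1[symmetric] simp del: ennreal_1)
  qed
  finally show ?thesis
    by simp
qed

lemma le_e2ennreal_diff_plus_one:
  fixes I N P :: ennreal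
  assumes "I + N \<le> P + 1"
  shows "I \<le> e2ennreal (enn2ereal P - enn2ereal N) + 1"
proof (cases "N = \<infinity>")
  case True
  with assms show ?thesis
    by (simp add: top_unique)
next
  case False
  with assms show ?thesis
    by (simp add: add.commute ennreal_le_minus_iff order_trans[OF _ add_diff_le_ennreal])
qed

lemma nn_integral_log_RN_deriv_plus_one_le_KL_bits:
  fixes Q P :: "'b measure"
  assumes "prob_space Q" "prob_space P" and sets_eq: "sets P = sets Q"
    and ac: "absolutely_continuous Q P"
  shows "(\<integral>\<^sup>+ y. ennreal (log 2 (enn2real (RN_deriv Q P y) + 1)) \<partial>P) \<le> e2ennreal (KL_bits Q P) + 1"
proof -
  interpret Q: prob_space Q by fact
  interpret P: prob_space P by fact
  define r where "r y = enn2real (RN_deriv Q P y)" for y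
  define c where "c = 1 / (2 * ln (2::real))"
  have [measurable]: "r \<in> borel_measurable P"
    unfolding r_def measurable_cong_sets[OF sets_eq refl] by measurable
  have density: "entropy_density 2 Q P y = log 2 (r y)" for y
    by (simp add: entropy_density_def r_def)
  define I where "I = (\<integral>\<^sup>+ y. ennreal (log 2 (r y + 1)) \<partial>P)"
  define Pos where "Pos = (\<integral>\<^sup>+ y. ennreal (log 2 (r y)) \<partial>P)"
  define Neg where "Neg = (\<integral>\<^sup>+ y. ennreal (- log 2 (r y)) \<partial>P)"
  have "I + Neg + ennreal c
      = (\<integral>\<^sup>+ y. ennreal (log 2 (r y + 1)) + ennreal (- log 2 (r y)) + ennreal c \<partial>P)"
    by (simp add: I_def Neg_def nn_integral_add P.emeasure_space_1)
  also have "\<dots> \<le> (\<integral>\<^sup>+ y. ennreal (log 2 (r y)) + 1 + ennreal c * ennreal (1 / r y) \<partial>P)"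
    by (intro nn_integral_mono) (simp add: c_def r_def ennreal_log_plus_one_le)
  also have "\<dots> = Pos + 1 + ennreal c * (\<integral>\<^sup>+ y. ennreal (1 / r y) \<partial>P)"
    by (simp add: Pos_def nn_integral_add nn_integral_cmult P.emeasure_space_1)
  also have "\<dots> \<le> Pos + 1 + ennreal c"
    using nn_integral_inverse_RN_deriv_le[OF Q.sigma_finite_measure_axioms ac sets_eq]
    by (intro add_left_mono) (simp add: r_def Q.emeasure_space_1 mult_left_le)
  finally have "I + Neg \<le> Pos + 1"
    by (simp add: add.commute add.left_commute)
  then show ?thesis
    unfolding KL_bits_def density Pos_def Neg_def I_def[symmetric] r_def[symmetric]
    by (rule le_e2ennreal_diff_plus_one)
qed

text \<open>Neither \<open>f\<close> nor \<open>g\<close> need to be measurable (in the application \<open>f\<close> is a KL divergence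
  as a function of \<open>x\<close>), so the proof works with the simple functions below \<open>g\<close>.\<close>
lemma nn_integral_AE_le_plus_const:
  fixes f g :: "'a \<Rightarrow> ennreal"
  assumes "prob_space M" and le: "AE x in M. g x \<le> f x + c"
  shows "(\<integral>\<^sup>+ x. g x \<partial>M) \<le> (\<integral>\<^sup>+ x. f x \<partial>M) + c"
proof (cases "c = \<infinity>")
  case False
  interpret prob_space M by fact
  define g' where "g' x = min (g x) (f x + c)" for x
  have "(\<integral>\<^sup>+ x. g x \<partial>M) \<le> (\<integral>\<^sup>+ x. g' x \<partial>M)"
    using le by (intro nn_integral_mono_AE) (auto simp: g'_def)
  also have "\<dots> \<le> (\<integral>\<^sup>+ x. f x \<partial>M) + c"
    unfolding nn_integral_def[of M g']
  proof (rule SUP_least)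
    fix s assume "s \<in> {s. simple_function M s \<and> s \<le> g'}"
    then have s: "simple_function M s" "\<And>x. s x \<le> f x + c"
      by (auto simp: le_fun_def g'_def intro: order_trans)
    define s' where "s' x = s x - c" for x
    have s': "simple_function M s'"
      unfolding s'_def using simple_function_compose[OF s(1), of "\<lambda>a. a - c"] by (simp add: o_def)
    have "integral\<^sup>S M s = (\<integral>\<^sup>+ x. s x \<partial>M)"
      using s(1) by (simp add: nn_integral_eq_simple_integral)
    also have "\<dots> \<le> (\<integral>\<^sup>+ x. s' x + c \<partial>M)"
      by (intro nn_integral_mono) (auto simp: s'_def diff_add_self_ennreal)
    also have "\<dots> = (\<integral>\<^sup>+ x. s' x \<partial>M) + c"
      using s' by (simp add: nn_integral_add borel_measurable_simple_function emeasure_space_1)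
    also have "\<dots> \<le> (\<integral>\<^sup>+ x. f x \<partial>M) + c"
      using s(2) False
      by (intro add_right_mono nn_integral_mono) (simp add: s'_def ennreal_minus_le_iff add.commute)
    finally show "integral\<^sup>S M s \<le> (\<integral>\<^sup>+ x. f x \<partial>M) + c" .
  qed
  finally show ?thesis .
qed simp

theorem mainTheorem3:
  fixes PX :: "'a measure" and K :: "'a \<Rightarrow> 'b measure" and Q :: "'b measure"
  assumes "prob_space PX"
    and "prob_space Q"
    and "K \<in> PX \<rightarrow>\<^sub>M prob_algebra Q"
    and "AE x in PX. absolutely_continuous Q (K x)"
  shows "(\<integral>\<^sup>+ x. \<integral>\<^sup>+ y. \<integral>\<^sup>+ j. ennreal (log 2 (real j))
            \<partial>measure_pmf (geom_pos (1 / (enn2real (RN_deriv Q (K x) y) + 1))) \<partial>K x \<partial>PX)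
         \<le> (\<integral>\<^sup>+ x. e2ennreal (KL_bits Q (K x)) \<partial>PX) + 1"
proof (intro nn_integral_AE_le_plus_const[OF assms(1)])
  show "AE x in PX. (\<integral>\<^sup>+ y. \<integral>\<^sup>+ j. ennreal (log 2 (real j))
            \<partial>measure_pmf (geom_pos (1 / (enn2real (RN_deriv Q (K x) y) + 1))) \<partial>K x)
         \<le> e2ennreal (KL_bits Q (K x)) + 1"
    using assms(4) AE_space
  proof eventually_elim
    case (elim x)
    then have "K x \<in> space (prob_algebra Q)"
      using measurable_space[OF assms(3)] by simp
    then have Kx: "sets (K x) = sets Q" "prob_space (K x)"
      by (auto simp: space_prob_algebra)
    have "1 / (enn2real t + 1) \<in> {0<..1}" for t
      using enn2real_nonneg[of t] by (simp add: divide_le_eq_1 add_nonneg_pos)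
    then have "(\<integral>\<^sup>+ y. \<integral>\<^sup>+ j. ennreal (log 2 (real j))
            \<partial>measure_pmf (geom_pos (1 / (enn2real (RN_deriv Q (K x) y) + 1))) \<partial>K x)
        \<le> (\<integral>\<^sup>+ y. ennreal (log 2 (enn2real (RN_deriv Q (K x) y) + 1)) \<partial>K x)"
      by (intro nn_integral_mono order_trans[OF nn_integral_log_geom_pos_le]) auto
    also have "\<dots> \<le> e2ennreal (KL_bits Q (K x)) + 1"
      using nn_integral_log_RN_deriv_plus_one_le_KL_bits[OF assms(2) Kx(2,1) elim(1)] .
    finally show ?case .
  qed
qed

end
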